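(* For all integers $m$ and $n$, \[ L_m \sum_{k = 1}^n ( - 1)^{k(m - 1)} L_{2mk} = ( - 1)^{n(m - 1)} L_{2mn+m} - L_m\,. \]
   Context: $L_i$ denotes the Lucas numbers, defined for all $i\in\mathbb{Z}$ by $L_i=L_{i-1}+L_{i-2}$, $L_0=2$, $L_1=1$; equivalently $L_{-i}=(-1)^iL_i$. Summation convention for an arbitrary integer upper limit: $\sum_{k=a}^{a-1} f(k)=0$, and for $n<a-1$, $\sum_{k=a}^{n} f(k) = -\sum_{k=n+1}^{a-1} f(k)$. *)

theory Defs
  imports Main
begin

fun lucas_nat :: "nat \<Rightarrow> int" where
  "lucas_nat 0 = 2"
| "lucas_nat (Suc 0) = 1"
| "lucas_nat (Suc (Suc n)) = lucas_nat (Suc n) + lucas_nat n"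

definition lucas :: "int \<Rightarrow> int" where
  "lucas i = (if 0 \<le> i then lucas_nat (nat i)
              else (-1) ^ nat (- i) * lucas_nat (nat (- i)))"

definition neg1pow :: "int \<Rightarrow> int" where
  "neg1pow j = (if even j then 1 else -1)"

text \<open>Sum from a to n with the convention for arbitrary integer upper limit:
  empty if n = a - 1, and for n < a - 1 it equals minus the sum from n+1 to a-1.\<close>
definition gsum :: "(int \<Rightarrow> int) \<Rightarrow> int \<Rightarrow> int \<Rightarrow> int" where
  "gsum f a n = (if a - 1 \<le> n then (\<Sum>k\<in>{a..n}. f k) else - (\<Sum>k\<in>{n+1..a-1}. f k))"

end

theory Submission
  imports Defs
begin

text \<open>Multiplying the summand by \<open>L\<^sub>m\<close> and applying \<open>L\<^sub>a L\<^sub>b = L\<^sub>a\<^sub>+\<^sub>b + (-1)\<^sup>b L\<^sub>a\<^sub>-\<^sub>b\<close>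
  with \<open>a = 2mk\<close>, \<open>b = m\<close> turns the sum into a telescoping one for
  \<open>G k = (-1)\<^bsup>k(m-1)\<^esup> L\<^sub>2\<^sub>m\<^sub>k\<^sub>+\<^sub>m\<close>. The product formula itself holds because both
  sides satisfy the Lucas recurrence in \<open>b\<close> and agree at \<open>b = 0, 1\<close>.\<close>

lemma lucas_of_nat: "lucas (int j) = lucas_nat j"
  by (simp add: lucas_def)

lemma lucas_uminus_of_nat: "lucas (- int j) = (-1) ^ j * lucas_nat j"
  by (cases "j = 0") (auto simp: lucas_def)

lemma lucas_add_2: "lucas (n + 2) = lucas (n + 1) + lucas n"
proof (cases "n \<ge> 0")
  case True
  then obtain j where "n = int j"
    by (metis nonneg_eq_int)
  moreover have "lucas (int (Suc (Suc j))) = lucas (int (Suc j)) + lucas (int j)"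
    by (simp only: lucas_of_nat) simp
  ultimately show ?thesis
    by (simp add: add.commute)
next
  case False
  show ?thesis
  proof (cases "n = -1")
    case True
    then show ?thesis by (simp add: lucas_def)
  next
    case False
    define j where "j = nat (- n - 2)"
    with \<open>\<not> n \<ge> 0\<close> False have "n + 2 = - int j" "n + 1 = - int (Suc j)"
      "n = - int (Suc (Suc j))"
      by auto
    then show ?thesis
      by (simp only: lucas_uminus_of_nat) (simp add: algebra_simps)
  qed
qed

lemma linear_recurrence_int_eqI:
  fixes f g :: "int \<Rightarrow> 'a :: ab_group_add"
  assumes "\<And>b. f (b + 2) = f (b + 1) + f b"
    and "\<And>b. g (b + 2) = g (b + 1) + g b"
    and "f 0 = g 0" and "f 1 = g 1"
  shows "f b = g b"
proof -
  define d where "d b = f b - g b" for b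
  have d_rec: "d (b + 2) = d (b + 1) + d b" for b
    using assms(1,2)[of b] by (simp add: d_def algebra_simps)
  have "d b = 0 \<and> d (b + 1) = 0"
  proof (induction b rule: int_induct[where k = 0])
    case base
    then show ?case using assms(3,4) by (simp add: d_def)
  next
    case (step1 i)
    then show ?case using d_rec[of i] by (simp add: add.assoc)
  next
    case (step2 i)
    have "d (i - 1) = d (i + 1) - d i"
      using d_rec[of "i - 1"] by (simp add: algebra_simps)
    with step2 show ?case by simp
  qed
  then show ?thesis by (simp add: d_def)
qed

lemma lucas_mult: "lucas a * lucas b = lucas (a + b) + neg1pow b * lucas (a - b)"
proof (rule linear_recurrence_int_eqI[where f = "\<lambda>b. lucas a * lucas b"])
  show "lucas a * lucas (b + 2) = lucas a * lucas (b + 1) + lucas a * lucas b" for b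
    by (simp add: lucas_add_2 distrib_left)
next
  fix b
  have "lucas (a - (b + 2)) = lucas (a - b) - lucas (a - (b + 1))"
    using lucas_add_2[of "a - (b + 2)"] by (simp add: algebra_simps)
  moreover have "lucas (a + (b + 2)) = lucas (a + (b + 1)) + lucas (a + b)"
    using lucas_add_2[of "a + b"] by (simp add: algebra_simps)
  ultimately show "lucas (a + (b + 2)) + neg1pow (b + 2) * lucas (a - (b + 2))
    = lucas (a + (b + 1)) + neg1pow (b + 1) * lucas (a - (b + 1))
      + (lucas (a + b) + neg1pow b * lucas (a - b))"
    by (simp add: neg1pow_def algebra_simps)
next
  show "lucas a * lucas 0 = lucas (a + 0) + neg1pow 0 * lucas (a - 0)"
    by (simp add: lucas_def neg1pow_def)
next
  show "lucas a * lucas 1 = lucas (a + 1) + neg1pow 1 * lucas (a - 1)"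
    using lucas_add_2[of "a - 1"] by (simp add: lucas_def neg1pow_def add.commute)
qed

lemma gsum_telescope:
  assumes "\<And>k. f k = G k - G (k - 1)"
  shows "gsum f 1 n = G n - G 0"
proof (induction n rule: int_induct[where k = 0])
  case base
  then show ?case by (simp add: gsum_def)
next
  case (step1 i)
  then have "{1..i + 1} = insert (i + 1) {1..i}"
    by auto
  with step1 show ?case
    by (simp add: gsum_def assms)
next
  case (step2 i)
  show ?case
  proof (cases "i = 0")
    case True
    then show ?thesis by (simp add: gsum_def assms)
  next
    case False
    with step2 have "i < 0" by simp
    then have "{i..0} = insert i {i + 1..0}"
      by auto
    with step2 \<open>i < 0\<close> show ?thesis
      by (simp add: gsum_def assms)
  qed
qed

lemma gsum_mult_left: "c * gsum f a n = gsum (\<lambda>k. c * f k) a n"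
  by (simp add: gsum_def sum_distrib_left)

theorem lemma4:
  fixes m n :: int
  shows "lucas m * gsum (\<lambda>k. neg1pow (k * (m - 1)) * lucas (2 * m * k)) 1 n
         = neg1pow (n * (m - 1)) * lucas (2 * m * n + m) - lucas m"
proof -
  define G where "G k = neg1pow (k * (m - 1)) * lucas (2 * m * k + m)" for k
  have "lucas m * (neg1pow (k * (m - 1)) * lucas (2 * m * k)) = G k - G (k - 1)" for k
  proof -
    have "lucas m * (neg1pow (k * (m - 1)) * lucas (2 * m * k))
        = neg1pow (k * (m - 1)) * (lucas (2 * m * k) * lucas m)"
      by simp
    also have "\<dots> = neg1pow (k * (m - 1)) * lucas (2 * m * k + m)
          + (neg1pow (k * (m - 1)) * neg1pow m) * lucas (2 * m * k - m)"
      unfolding lucas_mult by (simp add: algebra_simps)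
    also have "2 * m * k - m = 2 * m * (k - 1) + m"
      by (simp add: algebra_simps)
    also have "neg1pow (k * (m - 1)) * neg1pow m = - neg1pow ((k - 1) * (m - 1))"
      by (simp add: neg1pow_def algebra_simps)
    finally show ?thesis
      by (simp add: G_def)
  qed
  then have "lucas m * gsum (\<lambda>k. neg1pow (k * (m - 1)) * lucas (2 * m * k)) 1 n = G n - G 0"
    unfolding gsum_mult_left by (rule gsum_telescope)
  then show ?thesis
    by (simp add: G_def neg1pow_def)
qed

end
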